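(* There exists an absolute constant $\xi>0$ such that for every $\rho<\xi$, every sufficiently large $m$ and every sufficiently small $\epsilon$, the instance $G^{(\rho)}_{n,\ell}$ satisfies $k_u\ge n^{\Omega(1/\ell)}=n^{\Omega(\epsilon)}$ for every non-sink vertex $u$. Moreover, for $\ell=3$ (i.e. $\epsilon=1$), $k_u=n^{\Omega(1)}$ for every non-sink vertex $u$.
   Context: The instance $G^{(\rho)}_{n,\ell}$: integers $m$ and $1/\epsilon$ with $\epsilon\rho m\in\mathbb N$, $\ell=3/\epsilon$, and (standing assumption) $\epsilon m=\omega(\log m)$; ground set $[m]$. Each vertex $v$ has a label $S_v\subseteq[m]$: $L_0=\{s\}$ (the source) with $S_s=\emptyset$; for $1\le i<2/\epsilon$, $L_i$ has one vertex per subset of size $i\epsilon\rho m$; for $2/\epsilon\le i\le 3/\epsilon$, $L_i$ has one vertex per subset of size $(4-i\epsilon)\rho m$. For $u\in L_{i-1},v\in L_i$ there is an edge $(u,v)$ iff $S_u\subseteq S_v$ (if $i\le 2/\epsilon$) or $S_v\subseteq S_u$ (if $i>2/\epsilon$). Sinks: $L_{3/\epsilon}$. With $\delta^+_i$ the out-degree of vertices of $L_i$, the required out-degree is $k_v=\gamma_i\delta^+_i$ for $v\in L_i$, $i<\ell$, where $\gamma_i=\gamma'_1$ ($0\le i<1/\epsilon$), $\gamma'_2$ ($1/\epsilon\le i<2/\epsilon$), $\gamma'_3$ ($2/\epsilon\le i<3/\epsilon$), $\gamma'_1=\frac{(\epsilon\rho m)!}{((\rho m)!\binom{(1-\rho)m}{\rho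 m})^{\epsilon}}$, $\gamma'_2=\frac{(\epsilon\rho m)!}{((\rho m)!\binom{2\rho m}{\rho m})^{\epsilon}}$, $\gamma'_3=\frac{(\epsilon\rho m)!}{((\rho m)!)^{\epsilon}}$. $n$ is the number of vertices, $n=2^{\Theta(m)}$. *)

theory Defs
  imports Complex_Main
begin

text \<open>Parameters: t = 1/epsilon (positive integer), a = epsilon*rho*m
  (natural number), hence rho*m = t*a and l = 3t.\<close>

definition lsize :: "nat \<Rightarrow> nat \<Rightarrow> nat \<Rightarrow> nat" where
  "lsize t a i = (if i < 2 * t then i * a else (4 * t - i) * a)"

definition verts :: "nat \<Rightarrow> nat \<Rightarrow> nat \<Rightarrow> (nat \<times> nat set) set" where
  "verts t a m = {(i, S). i \<le> 3 * t \<and> S \<subseteq> {1..m} \<and> card S = lsize t a i}"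

definition edge :: "nat \<Rightarrow> nat \<times> nat set \<Rightarrow> nat \<times> nat set \<Rightarrow> bool" where
  "edge t u v = (fst v = fst u + 1 \<and>
     (if fst v \<le> 2 * t then snd u \<subseteq> snd v else snd v \<subseteq> snd u))"

definition outdeg :: "nat \<Rightarrow> nat \<Rightarrow> nat \<Rightarrow> nat \<times> nat set \<Rightarrow> nat" where
  "outdeg t a m u = card {v \<in> verts t a m. edge t u v}"

text \<open>gamma'_1, gamma'_2, gamma'_3, written with rho*m = t*a, (1-rho)m = m - t*a,
  2 rho m = 2*t*a, epsilon = 1/t.\<close>

definition gamma1 :: "nat \<Rightarrow> nat \<Rightarrow> nat \<Rightarrow> real" where
  "gamma1 t a m = fact a / (real (fact (t * a) * ((m - t * a) choose (t * a)))) powr (1 / real t)"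

definition gamma2 :: "nat \<Rightarrow> nat \<Rightarrow> real" where
  "gamma2 t a = fact a / (real (fact (t * a) * ((2 * t * a) choose (t * a)))) powr (1 / real t)"

definition gamma3 :: "nat \<Rightarrow> nat \<Rightarrow> real" where
  "gamma3 t a = fact a / (real (fact (t * a))) powr (1 / real t)"

definition gammaL :: "nat \<Rightarrow> nat \<Rightarrow> nat \<Rightarrow> nat \<Rightarrow> real" where
  "gammaL t a m i = (if i < t then gamma1 t a m else if i < 2 * t then gamma2 t a else gamma3 t a)"

definition kreq :: "nat \<Rightarrow> nat \<Rightarrow> nat \<Rightarrow> nat \<times> nat set \<Rightarrow> real" where
  "kreq t a m v = gammaL t a m (fst v) * real (outdeg t a m v)"

definition nverts :: "nat \<Rightarrow> nat \<Rightarrow> nat \<Rightarrow> nat" where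
  "nverts t a m = card (verts t a m)"

end

theory Submission
  imports Defs
begin

(* A non-sink vertex (i, S) has at least C(M, a) out-neighbours, where M is at least m - t a,
   4 t a or t a + a according to the third of the graph containing layer i; hence
   a! \<delta> \<ge> B^a with B = m - t a, 4 t a or t a respectively.  The normaliser X in
   \<gamma>_i = a! / X^(1/t) is the falling factorial (m - t a)_(t a), (2 t a)_(t a) or (t a)!, and
   for \<rho> \<le> 1/6 each of these is smaller than B^(t a) by at least a factor (1 + \<rho>/4)^(t a / 2).
   Taking t-th roots, k_v \<ge> (1 + \<rho>/4)^(a/2) = exp(\<Omega>(\<rho> m / t)), whereas n \<le> 8^m. *)

lemma fact_mult_binomial_eq_prod: "fact k * (N choose k) = (\<Prod>j<k. N - j)"
proof (induction k arbitrary: N)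
  case 0
  then show ?case by simp
next
  case (Suc k)
  show ?case
  proof (cases N)
    case 0
    then show ?thesis by (simp add: prod.lessThan_Suc_shift)
  next
    case (Suc n)
    have "fact (Suc k) * (Suc n choose Suc k) = fact k * (Suc k * (Suc n choose Suc k))"
      by (simp add: algebra_simps)
    also have "\<dots> = Suc n * (fact k * (n choose k))"
      by (simp only: Suc_times_binomial) (simp add: algebra_simps)
    also have "\<dots> = Suc n * (\<Prod>j<k. n - j)"
      using Suc.IH by simp
    also have "\<dots> = (\<Prod>j<Suc k. Suc n - j)"
      by (subst prod.lessThan_Suc_shift) simp
    finally show ?thesis using Suc by simp
  qed
qed

lemma power_le_fact_mult_binomial:
  assumes "B \<le> N + 1 - k"
  shows "B ^ k \<le> fact k * (N choose k)"
proof -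
  have "(\<Prod>j<k. B) \<le> (\<Prod>j<k. N - j)"
    using assms by (intro prod_mono) auto
  then show ?thesis by (simp add: fact_mult_binomial_eq_prod)
qed

lemma fact_mult_binomial_le_split_power:
  assumes "h \<le> k"
  shows "fact k * (N choose k) \<le> N ^ h * (N - h) ^ (k - h)"
proof -
  have "(\<Prod>j<k. N - j) = (\<Prod>j\<in>{0..<h}. N - j) * (\<Prod>j\<in>{h..<k}. N - j)"
    using prod.atLeastLessThan_concat[of 0 h k "\<lambda>j. N - j"] assms
    by (simp add: atLeast0LessThan)
  also have "\<dots> \<le> (\<Prod>j\<in>{0..<h}. N) * (\<Prod>j\<in>{h..<k}. N - h)"
    by (intro mult_mono prod_mono) auto
  finally show ?thesis by (simp add: fact_mult_binomial_eq_prod)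
qed

lemma two_mult_power_le_Suc_power:
  assumes "1 \<le> n"
  shows "2 * real n ^ n \<le> real (Suc n) ^ n"
proof -
  have "1 + real n * (1 / real n) \<le> (1 + 1 / real n) ^ n"
    by (rule Bernoulli_inequality) (simp add: order_trans[of _ 0])
  then have "2 * real n ^ n \<le> (1 + 1 / real n) ^ n * real n ^ n"
    using assms by (intro mult_right_mono) auto
  also have "\<dots> = real (Suc n) ^ n"
    using assms by (simp flip: power_mult_distrib add: field_simps)
  finally show ?thesis .
qed

lemma two_power_mult_fact_le_power: "2 ^ (n - 1) * fact n \<le> real n ^ n"
proof (induction n)
  case 0
  then show ?case by simp
next
  case (Suc n)
  show ?case
  proof (cases "n = 0")
    case True
    then show ?thesis by simp
  next
    case False
    have "2 ^ n * fact (Suc n) = real (Suc n) * (2 * (2 ^ (n - 1) * fact n))"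
      using False by (simp add: power_eq_if)
    also have "\<dots> \<le> real (Suc n) * (2 * real n ^ n)"
      using Suc.IH by (intro mult_left_mono) auto
    also have "\<dots> \<le> real (Suc n) * real (Suc n) ^ n"
      using two_mult_power_le_Suc_power[of n] False by (intro mult_left_mono) auto
    finally show ?thesis by simp
  qed
qed

lemma powr_half_le_two_power:
  fixes b :: real
  assumes "0 < b" "b \<le> 2" "2 \<le> k"
  shows "b powr (real k / 2) \<le> 2 ^ (k - 1)"
proof -
  have "b powr (real k / 2) \<le> 2 powr (real k / 2)"
    using assms by (intro powr_mono2) auto
  also have "\<dots> \<le> 2 powr (real (k - 1))"
    using assms by (intro powr_mono) (auto simp: of_nat_diff)
  finally show ?thesis by (simp add: powr_realpow)
qed

lemma powr_mult_fact_binomial_le_power: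
  fixes \<rho> :: real
  assumes "0 \<le> \<rho>" "\<rho> * real N \<le> real k" "2 \<le> k" "k \<le> N"
  shows "(1 + \<rho>/4) powr (real k / 2) * real (fact k * (N choose k)) \<le> real N ^ k"
proof -
  \<comment> \<open>Bound the first \<open>h\<close> factors of the falling factorial by \<open>N\<close> and the others by
    \<open>N - h \<le> N / b\<close>.\<close>
  define b h where "b = 1 + \<rho>/4" and "h = k div 2"
  have b: "1 \<le> b" using assms by (simp add: b_def)
  have h: "h \<le> k" "h \<le> N" "real k / 2 \<le> real (k - h)" "real k \<le> 4 * real h"
    using assms by (auto simp: h_def)
  have "\<rho> * real N \<le> 4 * real h + \<rho> * real h"
    using h assms by (simp add: add_increasing2)
  then have "b * (real N - real h) \<le> real N"
    by (simp add: b_def algebra_simps)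
  then have shrink: "b * real (N - h) \<le> real N"
    using h by (simp add: of_nat_diff)
  have "b powr (real k / 2) * real (fact k * (N choose k))
      \<le> b ^ (k - h) * (real N ^ h * real (N - h) ^ (k - h))"
  proof (rule mult_mono)
    show "b powr (real k / 2) \<le> b ^ (k - h)"
      using b h by (simp flip: powr_realpow add: powr_mono)
    show "real (fact k * (N choose k)) \<le> real N ^ h * real (N - h) ^ (k - h)"
      using fact_mult_binomial_le_split_power[OF h(1), of N]
      by (simp flip: of_nat_power of_nat_mult)
  qed (use b in auto)
  also have "\<dots> = real N ^ h * (b * real (N - h)) ^ (k - h)"
    by (simp add: power_mult_distrib)
  also have "\<dots> \<le> real N ^ h * real N ^ (k - h)"
    using b shrink by (intro mult_left_mono power_mono) auto
  also have "\<dots> = real N ^ k"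
    using h by (simp flip: power_add)
  finally show ?thesis by (simp add: b_def)
qed

lemma powr_inverse_le_divide_powr:
  fixes X Y Z :: real
  assumes "1 \<le> t" "0 < X" "0 < Z" "0 \<le> Y" "Z * X \<le> Y ^ t"
  shows "Z powr (1 / real t) \<le> Y / X powr (1 / real t)"
proof -
  have "0 < Y ^ t"
    using assms by (smt (verit) mult_pos_pos)
  then have "0 < Y"
    using assms(1,4) by (cases "Y = 0") (auto simp: power_0_left)
  have "(Z * X) powr (1 / real t) \<le> (Y ^ t) powr (1 / real t)"
    using assms by (intro powr_mono2) auto
  also have "(Y ^ t) powr (1 / real t) = Y"
    using \<open>0 < Y\<close> assms(1) by (simp add: powr_realpow[symmetric] powr_powr)
  finally show ?thesis
    using assms by (simp add: powr_mult pos_le_divide_eq)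
qed

lemma finite_verts: "finite (verts t a m)"
  by (rule finite_subset[of _ "{..3*t} \<times> Pow {1..m}"]) (auto simp: verts_def)

lemma nverts_le: "nverts t a m \<le> (3 * t + 1) * 2 ^ m"
proof -
  have "nverts t a m \<le> card ({..3*t} \<times> Pow {1..m})"
    unfolding nverts_def by (rule card_mono) (auto simp: verts_def)
  then show ?thesis by (simp add: card_cartesian_product card_Pow)
qed

lemma nverts_le_eight_power:
  assumes "t \<le> m"
  shows "nverts t a m \<le> 8 ^ m"
proof -
  have "3 * m + 1 \<le> (4::nat) ^ m"
    by (induction m) auto
  then have "(3 * t + 1) * 2 ^ m \<le> 4 ^ m * 2 ^ m"
    using assms by (intro mult_right_mono) auto
  then show ?thesis
    using nverts_le[of t a m] by (simp flip: power_mult_distrib)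
qed

lemma binomial_le_outdeg_ascending:
  assumes "(i, S) \<in> verts t a m" "i < 2 * t"
  shows "(m - i * a) choose a \<le> outdeg t a m (i, S)"
proof -
  have S: "S \<subseteq> {1..m}" "card S = i * a" "finite S"
    using assms by (auto simp: verts_def lsize_def intro: finite_subset)
  define F where "F = {T. T \<subseteq> {1..m} - S \<and> card T = a}"
  have card_F: "card F = (m - i * a) choose a"
    unfolding F_def using S by (simp add: n_subsets card_Diff_subset)
  have "inj_on (\<lambda>T. (i + 1, S \<union> T)) F"
    by (rule inj_onI) (auto simp: F_def)
  moreover have "(\<lambda>T. (i + 1, S \<union> T)) ` F
      \<subseteq> {v \<in> verts t a m. edge t (i, S) v}"
  proof (rule image_subsetI)
    fix T assume T: "T \<in> F"
    then have "finite T" "S \<inter> T = {}" "card T = a"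
      by (auto simp: F_def intro: finite_subset)
    then have "card (S \<union> T) = i * a + a"
      using S by (simp add: card_Un_disjoint)
    moreover have "lsize t a (i + 1) = i * a + a"
    proof (cases "i + 1 < 2 * t")
      case False
      then have "4 * t - (i + 1) = i + 1"
        using assms(2) by simp
      then show ?thesis
        using False by (simp add: lsize_def algebra_simps)
    qed (simp add: lsize_def algebra_simps)
    ultimately show "(i + 1, S \<union> T) \<in> {v \<in> verts t a m. edge t (i, S) v}"
      using T S assms(2) by (auto simp: verts_def edge_def F_def)
  qed
  ultimately have "card F \<le> card {v \<in> verts t a m. edge t (i, S) v}"
    by (rule card_inj_on_le) (simp add: finite_verts)
  then show ?thesis
    using card_F by (simp add: outdeg_def)
qed

lemma binomial_le_outdeg_descending:
  assumes "(i, S) \<in> verts t a m" "2 * t \<le> i" "i < 3 * t"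
  shows "((4 * t - i) * a) choose a \<le> outdeg t a m (i, S)"
proof -
  have S: "S \<subseteq> {1..m}" "card S = (4 * t - i) * a" "finite S"
    using assms by (auto simp: verts_def lsize_def intro: finite_subset)
  have sizes: "(4 * t - i) * a = (4 * t - (i + 1)) * a + a"
    using assms by (simp add: Suc_diff_Suc[symmetric] flip: diff_mult_distrib)
  define F where "F = {T. T \<subseteq> S \<and> card T = (4 * t - (i + 1)) * a}"
  have card_F: "card F = ((4 * t - i) * a) choose a"
    unfolding F_def using S sizes binomial_symmetric[of a "(4 * t - i) * a"]
    by (simp add: n_subsets)
  have "inj_on (\<lambda>T. (i + 1, T)) F"
    by (simp add: inj_on_def)
  moreover have "(\<lambda>T. (i + 1, T)) ` F \<subseteq> {v \<in> verts t a m. edge t (i, S) v}"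
    using assms S by (auto simp: F_def verts_def edge_def lsize_def)
  ultimately have "card F \<le> card {v \<in> verts t a m. edge t (i, S) v}"
    by (rule card_inj_on_le) (simp add: finite_verts)
  then show ?thesis
    using card_F by (simp add: outdeg_def)
qed

lemma powr_le_kreq:
  fixes b :: real
  assumes "1 \<le> t" "0 < b" "0 < X" "gammaL t a m i = fact a / real X powr (1 / real t)"
    and "B ^ a \<le> fact a * outdeg t a m (i, S)"
    and "b powr (real (t * a) / 2) * real X \<le> real B ^ (t * a)"
  shows "b powr (real a / 2) \<le> kreq t a m (i, S)"
proof -
  define Y where "Y = fact a * real (outdeg t a m (i, S))"
  have "real B ^ a \<le> Y"
    using assms(5) unfolding Y_def by (metis of_nat_fact of_nat_le_iff of_nat_mult of_nat_power)
  then have "real B ^ (a * t) \<le> Y ^ t"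
    unfolding power_mult by (intro power_mono) auto
  with assms(6) have "b powr (real (t * a) / 2) * real X \<le> Y ^ t"
    by (metis mult.commute order.trans)
  then have "(b powr (real (t * a) / 2)) powr (1 / real t) \<le> Y / real X powr (1 / real t)"
    using assms by (intro powr_inverse_le_divide_powr) (auto simp: Y_def)
  moreover have "(b powr (real (t * a) / 2)) powr (1 / real t) = b powr (real a / 2)"
    using assms(1) by (simp add: powr_powr)
  ultimately show ?thesis
    using assms(4) by (simp add: kreq_def Y_def)
qed

context
  fixes \<rho> :: real and t a m :: nat
  assumes rho: "0 < \<rho>" "\<rho> \<le> 1/6" and t: "1 \<le> t"
    and rho_m: "real (t * a) = \<rho> * real m" and two_le: "2 \<le> t * a"
begin

lemma six_mult_layer_le: "6 * (t * a) \<le> m"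
proof -
  have "6 * (\<rho> * real m) \<le> real m"
    using rho mult_right_mono[of "6 * \<rho>" 1 "real m"] by simp
  then show ?thesis using rho_m by linarith
qed

lemma powr_le_kreq_first_third:
  assumes "(i, S) \<in> verts t a m" "i < t"
  shows "(1 + \<rho>/4) powr (real a / 2) \<le> kreq t a m (i, S)"
proof (rule powr_le_kreq[OF t])
  define k N where "k = t * a" and "N = m - t * a"
  have "i * a + a \<le> k"
    using mult_le_mono1[of "i + 1" t a] assms(2) by (simp add: k_def)
  then have "N ^ a \<le> fact a * ((m - i * a) choose a)"
    unfolding N_def k_def by (intro power_le_fact_mult_binomial) linarith
  also have "\<dots> \<le> fact a * outdeg t a m (i, S)"
    using binomial_le_outdeg_ascending[OF assms(1)] assms(2) by simp
  finally show "N ^ a \<le> fact a * outdeg t a m (i, S)" .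
  have "\<rho> * real N \<le> real k" "k \<le> N"
    using rho rho_m six_mult_layer_le by (auto simp: N_def k_def of_nat_diff algebra_simps)
  then show "(1 + \<rho>/4) powr (real (t * a) / 2) * real (fact k * (N choose k))
      \<le> real N ^ (t * a)"
    using powr_mult_fact_binomial_le_power[of \<rho> N k] rho two_le by (simp add: k_def)
  show "0 < fact k * (N choose k)"
    using \<open>k \<le> N\<close> by simp
  show "gammaL t a m i = fact a / real (fact k * (N choose k)) powr (1 / real t)"
    using assms(2) by (simp add: gammaL_def gamma1_def k_def N_def)
qed (use rho in simp)

lemma powr_le_kreq_second_third:
  assumes "(i, S) \<in> verts t a m" "t \<le> i" "i < 2 * t"
  shows "(1 + \<rho>/4) powr (real a / 2) \<le> kreq t a m (i, S)"
proof (rule powr_le_kreq[OF t])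
  define k where "k = t * a"
  have "i * a + a \<le> 2 * k"
    using mult_le_mono1[of "i + 1" "2 * t" a] assms(3) by (simp add: k_def)
  then have "(4 * k) ^ a \<le> fact a * ((m - i * a) choose a)"
    using six_mult_layer_le unfolding k_def by (intro power_le_fact_mult_binomial) linarith
  also have "\<dots> \<le> fact a * outdeg t a m (i, S)"
    using binomial_le_outdeg_ascending[OF assms(1)] assms(3) by simp
  finally show "(4 * k) ^ a \<le> fact a * outdeg t a m (i, S)" .
  have "(1 + \<rho>/4) powr (real k / 2) * real (fact k * ((2 * k) choose k))
      \<le> 2 ^ (k - 1) * real ((2 * k) ^ k)"
    using rho two_le binomial_fact_pow[of "2 * k" k]
    by (intro mult_mono powr_half_le_two_power)
      (auto simp: k_def mult.commute simp flip: of_nat_mult)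
  also have "\<dots> \<le> 2 ^ k * real ((2 * k) ^ k)"
    by (intro mult_right_mono power_increasing) auto
  also have "\<dots> = real (4 * k) ^ k"
    by (simp add: power_mult_distrib flip: power_mult_distrib[of 2 2])
  finally show "(1 + \<rho>/4) powr (real (t * a) / 2) * real (fact k * ((2 * k) choose k))
      \<le> real (4 * k) ^ (t * a)"
    by (simp add: k_def)
  show "0 < fact k * ((2 * k) choose k)"
    by simp
  show "gammaL t a m i = fact a / real (fact k * ((2 * k) choose k)) powr (1 / real t)"
    using assms(2,3) by (simp add: gammaL_def gamma2_def k_def mult.assoc)
qed (use rho in simp)

lemma powr_le_kreq_last_third:
  assumes "(i, S) \<in> verts t a m" "2 * t \<le> i" "i < 3 * t"
  shows "(1 + \<rho>/4) powr (real a / 2) \<le> kreq t a m (i, S)"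
proof (rule powr_le_kreq[OF t])
  define k where "k = t * a"
  have "(t + 1) * a \<le> (4 * t - i) * a"
    using assms(3) by (intro mult_le_mono1) simp
  then have "k ^ a \<le> fact a * (((4 * t - i) * a) choose a)"
    unfolding k_def by (intro power_le_fact_mult_binomial) (simp add: algebra_simps)
  also have "\<dots> \<le> fact a * outdeg t a m (i, S)"
    using binomial_le_outdeg_descending[OF assms] by simp
  finally show "k ^ a \<le> fact a * outdeg t a m (i, S)" .
  have "(1 + \<rho>/4) powr (real k / 2) * fact k \<le> 2 ^ (k - 1) * fact k"
    using rho two_le by (intro mult_right_mono powr_half_le_two_power) (auto simp: k_def)
  also have "\<dots> \<le> real k ^ k"
    by (rule two_power_mult_fact_le_power)
  finally show "(1 + \<rho>/4) powr (real (t * a) / 2) * real (fact k) \<le> real k ^ (t * a)"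
    by (simp add: k_def)
  show "0 < (fact k :: nat)"
    by simp
  show "gammaL t a m i = fact a / real (fact k) powr (1 / real t)"
    using assms(2) by (simp add: gammaL_def gamma3_def k_def)
qed (use rho in simp)

lemma powr_le_kreq_non_sink:
  assumes "v \<in> verts t a m" "fst v < 3 * t"
  shows "(1 + \<rho>/4) powr (real a / 2) \<le> kreq t a m v"
proof -
  obtain i S where v: "v = (i, S)"
    by fastforce
  consider "i < t" | "t \<le> i" "i < 2 * t" | "2 * t \<le> i" "i < 3 * t"
    using assms(2) v by fastforce
  then show ?thesis
    using powr_le_kreq_first_third powr_le_kreq_second_third powr_le_kreq_last_third assms(1) v
    by cases auto
qed

lemma nverts_powr_le_kreq:
  assumes "v \<in> verts t a m" "fst v < 3 * t"
  shows "real (nverts t a m) powr (\<rho> * ln (1 + \<rho>/4) / (2 * ln 8) / real t)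
    \<le> kreq t a m v"
proof -
  define c where "c = \<rho> * ln (1 + \<rho>/4) / (2 * ln 8) / real t"
  have "t \<le> t * a"
    using two_le by (cases a) auto
  then have "t \<le> m"
    using six_mult_layer_le by linarith
  have "real (nverts t a m) powr c \<le> (8 ^ m) powr c"
    using nverts_le_eight_power[OF \<open>t \<le> m\<close>] rho
    by (intro powr_mono2) (auto simp: c_def)
  also have "\<dots> = (1 + \<rho>/4) powr (real a / 2)"
    using t rho_m rho by (simp add: c_def powr_def ln_realpow field_simps)
  also have "\<dots> \<le> kreq t a m v"
    by (rule powr_le_kreq_non_sink[OF assms])
  finally show ?thesis by (simp add: c_def)
qed

end

theorem lemma7:
  shows "\<exists>\<xi>::real. \<xi> > 0 \<and>
    (\<forall>\<rho>::real. 0 < \<rho> \<and> \<rho> < \<xi> \<longrightarrow>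
       (\<exists>c::real. c > 0 \<and> (\<exists>\<epsilon>0::real. \<epsilon>0 > 0 \<and> (\<exists>K::real. \<exists>M::nat.
          \<forall>t m a :: nat. t \<ge> 1 \<and> 1 / real t \<le> \<epsilon>0 \<and> m \<ge> M \<and>
             real m / real t \<ge> K * ln (real m) \<and> real (t * a) = \<rho> * real m \<longrightarrow>
             (\<forall>v \<in> verts t a m. fst v < 3 * t \<longrightarrow>
                kreq t a m v \<ge> real (nverts t a m) powr (c / real t)))))) \<and>
    (\<forall>\<rho>::real. 0 < \<rho> \<and> \<rho> < \<xi> \<longrightarrow>
       (\<exists>c::real. c > 0 \<and> (\<exists>M::nat.
          \<forall>m a :: nat. m \<ge> M \<and> real a = \<rho> * real m \<longrightarrow>
             (\<forall>v \<in> verts 1 a m. fst v < 3 \<longrightarrow>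
                kreq 1 a m v \<ge> real (nverts 1 a m) powr c))))"
proof -
  define c where "c \<rho> = \<rho> * ln (1 + \<rho>/4) / (2 * ln 8)" for \<rho> :: real
  have c_pos: "0 < c \<rho>" if "0 < \<rho>" for \<rho>
    using that by (simp add: c_def)
  have bound: "real (nverts t a m) powr (c \<rho> / real t) \<le> kreq t a m v"
    if "0 < \<rho>" "\<rho> < 1/6" "1 \<le> t" "nat \<lceil>2 / \<rho>\<rceil> \<le> m"
      and "real (t * a) = \<rho> * real m"
      and "v \<in> verts t a m" "fst v < 3 * t" for \<rho> t a m v
  proof -
    have "2 / \<rho> \<le> real m"
      using that(4) by linarith
    then have "2 \<le> real (t * a)"
      using that(1,5) by (simp add: field_simps)
    then have "2 \<le> t * a"
      by linarith
    then show ?thesis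
      using nverts_powr_le_kreq that unfolding c_def by simp
  qed
  show ?thesis
    apply (rule exI[of _ "1/6"], intro conjI allI impI)
      apply simp
    subgoal for \<rho>
      apply (rule exI[of _ "c \<rho>"], rule conjI, simp add: c_pos)
      apply (rule exI[of _ 1], rule conjI, simp)
      apply (rule exI[of _ 0], rule exI[of _ "nat \<lceil>2 / \<rho>\<rceil>"])
      using bound by auto
    subgoal for \<rho>
      apply (rule exI[of _ "c \<rho>"], rule conjI, simp add: c_pos)
      apply (rule exI[of _ "nat \<lceil>2 / \<rho>\<rceil>"])
      using bound[of \<rho> 1] by auto
    done
qed

end
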